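(* Let $0<\varepsilon\le\tfrac13$, set $w=\varepsilon$ and $\delta=\dfrac{(1+\varepsilon)(1+w)}{((1+\varepsilon)(1+w)L)^{1/\varepsilon}}$, and run $\textsc{ApproxGeneral}(\varepsilon,\delta,w)$ with any $(1+w)$-approximate oracle $\mathcal{O}$. Then the following hold. (i) $\tau\le m\left\lceil\log_{1+\varepsilon}\frac{(1+\varepsilon)(1+w)}{\delta}\right\rceil$. (ii) $x_\tau/\log_{1+\varepsilon}\frac{(1+\varepsilon)(1+w)}{\delta}$ is a feasible $L$-bounded flow. (iii) The value of this scaled flow is at least $\beta/(1+5\varepsilon)$.
   Context: Let $G=(V,E)$ be a finite directed graph with $m=|E|$, capacities $c:E\to\mathbb{R}_{>0}$, edge lengths $\ell:E\to\mathbb{Z}_{\ge1}$, distinct vertices $s,t$, and a positive integer $L$. Let $\mathcal{P}_L$ be the set of directed simple $s$-$t$ paths $P$ with $\ell(P)=\sum_{e\in P}\ell(e)\le L$, and assume $\mathcal{P}_L\ne\emptyset$. An $L$-bounded flow is a function $x:\mathcal{P}_L\to\mathbb{R}_{\ge0}$, with value $\sum_P x(P)$. It is feasible if $\sum_{P\ni e}x(P)\le c(e)$ for all $e$. For $y:E\to\mathbb{R}_{\ge0}$ let $y(P)=\sum_{e\in P}y(e)$ and $d^L_y(s,t)=\min_{P\in\mathcal{P}_L}y(P)$. Let $\beta$ be the optimum of the LP $\min\{\sum_e c(e)y(e): y\ge0,\ y(P)\ge1\ \forall P\in\mathcal{P}_L\}$, which equals the maximum value of a feasible $L$-bounded flow.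 Logarithms without base are natural. A $(1+w)$-approximate oracle ($w>0$) is a map $\mathcal{O}$ assigning to each $y:E\to\mathbb{R}_{\ge0}$ a path $\mathcal{O}(y)\in\mathcal{P}_L$ with $y(\mathcal{O}(y))\le(1+w)\,d^L_y(s,t)$. Algorithm $\textsc{ApproxGeneral}(\varepsilon,\delta,w)$: - Initialize $i=0$, $y_0\equiv\delta$, and $x_0\equiv0$. Let $\alpha^L(i)=d^L_{y_i}(s,t)$ and $\bar\alpha^L(i)=y_i(\mathcal{O}(y_i))$. - While $\bar\alpha^L(i)<1+w$: - set $i\leftarrow i+1$; - let $P_i=\mathcal{O}(y_{i-1})$ and $c_i=\min_{e\in P_i}c(e)$; - set $x_i=x_{i-1}$ except $x_i(P_i)=x_{i-1}(P_i)+c_i$; - set $y_i(e)=y_{i-1}(e)(1+\varepsilon c_i/c(e))$ for $e\in P_i$, and $y_i(e)=y_{i-1}(e)$ otherwise. - Return $x_i$. $\tau$ is the number of iterations, and $f_i=\sum_Px_i(P)$. *)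

theory Defs
  imports Complex_Main
begin

definition edges_of :: "'v list \<Rightarrow> ('v \<times> 'v) list" where
  "edges_of vs = zip vs (tl vs)"

definition simple_st_path :: "('v \<times> 'v) set \<Rightarrow> 'v \<Rightarrow> 'v \<Rightarrow> 'v list \<Rightarrow> bool" where
  "simple_st_path E s t vs \<longleftrightarrow> vs \<noteq> [] \<and> hd vs = s \<and> last vs = t \<and> distinct vs
      \<and> set (edges_of vs) \<subseteq> E"

definition plen :: "('v \<times> 'v \<Rightarrow> 'a::comm_monoid_add) \<Rightarrow> 'v list \<Rightarrow> 'a" where
  "plen y P = (\<Sum>e\<in>set (edges_of P). y e)"

definition bounded_paths ::
  "('v \<times> 'v) set \<Rightarrow> ('v \<times> 'v \<Rightarrow> nat) \<Rightarrow> 'v \<Rightarrow> 'v \<Rightarrow> nat \<Rightarrow> 'v list set" where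
  "bounded_paths E len s t L = {P. simple_st_path E s t P \<and> plen len P \<le> L}"

definition dL :: "('v \<times> 'v) set \<Rightarrow> ('v \<times> 'v \<Rightarrow> nat) \<Rightarrow> 'v \<Rightarrow> 'v \<Rightarrow> nat
     \<Rightarrow> ('v \<times> 'v \<Rightarrow> real) \<Rightarrow> real" where
  "dL E len s t L y = Min ((\<lambda>P. plen y P) ` bounded_paths E len s t L)"

definition beta :: "('v \<times> 'v) set \<Rightarrow> ('v \<times> 'v \<Rightarrow> real) \<Rightarrow> ('v \<times> 'v \<Rightarrow> nat)
     \<Rightarrow> 'v \<Rightarrow> 'v \<Rightarrow> nat \<Rightarrow> real" where
  "beta E c len s t L = Inf {(\<Sum>e\<in>E. c e * y e) | y.
       (\<forall>e\<in>E. 0 \<le> y e) \<and> (\<forall>P\<in>bounded_paths E len s t L. 1 \<le> plen y P)}"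

definition approx_oracle :: "('v \<times> 'v) set \<Rightarrow> ('v \<times> 'v \<Rightarrow> nat) \<Rightarrow> 'v \<Rightarrow> 'v \<Rightarrow> nat
     \<Rightarrow> real \<Rightarrow> (('v \<times> 'v \<Rightarrow> real) \<Rightarrow> 'v list) \<Rightarrow> bool" where
  "approx_oracle E len s t L w Orc \<longleftrightarrow> (\<forall>y. (\<forall>e\<in>E. 0 \<le> y e) \<longrightarrow>
      Orc y \<in> bounded_paths E len s t L \<and> plen y (Orc y) \<le> (1 + w) * dL E len s t L y)"

definition feasible_Lflow :: "('v \<times> 'v) set \<Rightarrow> ('v \<times> 'v \<Rightarrow> real) \<Rightarrow> ('v \<times> 'v \<Rightarrow> nat)
     \<Rightarrow> 'v \<Rightarrow> 'v \<Rightarrow> nat \<Rightarrow> ('v list \<Rightarrow> real) \<Rightarrow> bool" where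
  "feasible_Lflow E c len s t L x \<longleftrightarrow>
     (\<forall>P. 0 \<le> x P) \<and> (\<forall>P. P \<notin> bounded_paths E len s t L \<longrightarrow> x P = 0) \<and>
     (\<forall>e\<in>E. (\<Sum>P\<in>{P\<in>bounded_paths E len s t L. e \<in> set (edges_of P)}. x P) \<le> c e)"

definition flow_value :: "('v \<times> 'v) set \<Rightarrow> ('v \<times> 'v \<Rightarrow> nat) \<Rightarrow> 'v \<Rightarrow> 'v \<Rightarrow> nat
     \<Rightarrow> ('v list \<Rightarrow> real) \<Rightarrow> real" where
  "flow_value E len s t L x = (\<Sum>P\<in>bounded_paths E len s t L. x P)"

definition ag_step :: "real \<Rightarrow> (('v \<times> 'v \<Rightarrow> real) \<Rightarrow> 'v list) \<Rightarrow> ('v \<times> 'v \<Rightarrow> real)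
     \<Rightarrow> ('v list \<Rightarrow> real) \<times> ('v \<times> 'v \<Rightarrow> real) \<Rightarrow> ('v list \<Rightarrow> real) \<times> ('v \<times> 'v \<Rightarrow> real)" where
  "ag_step \<epsilon> Orc c st = (let x = fst st; y = snd st; P = Orc y;
       ci = Min (c ` set (edges_of P)) in
     (x(P := x P + ci),
      \<lambda>e. if e \<in> set (edges_of P) then y e * (1 + \<epsilon> * ci / c e) else y e))"

primrec ag_state :: "real \<Rightarrow> real \<Rightarrow> (('v \<times> 'v \<Rightarrow> real) \<Rightarrow> 'v list) \<Rightarrow> ('v \<times> 'v \<Rightarrow> real)
     \<Rightarrow> nat \<Rightarrow> ('v list \<Rightarrow> real) \<times> ('v \<times> 'v \<Rightarrow> real)" where
  "ag_state \<epsilon> \<delta> Orc c 0 = (\<lambda>_. 0, \<lambda>_. \<delta>)"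
| "ag_state \<epsilon> \<delta> Orc c (Suc i) = ag_step \<epsilon> Orc c (ag_state \<epsilon> \<delta> Orc c i)"

definition ag_continue :: "real \<Rightarrow> real \<Rightarrow> real \<Rightarrow> (('v \<times> 'v \<Rightarrow> real) \<Rightarrow> 'v list)
     \<Rightarrow> ('v \<times> 'v \<Rightarrow> real) \<Rightarrow> nat \<Rightarrow> bool" where
  "ag_continue \<epsilon> \<delta> w Orc c i \<longleftrightarrow>
     (let y = snd (ag_state \<epsilon> \<delta> Orc c i) in plen y (Orc y) < 1 + w)"

end

theory Submission
  imports Defs "HOL-Analysis.Convex"
begin

text \<open>Multiplicative-weights analysis in the style of Garg and Koenemann. An update multiplies
  the length y(e) of every edge of the chosen path by at least (1 + \<epsilon>) powr (added flow / c e),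
  and no edge gets longer than (1 + \<epsilon>)(1 + w) before the loop stops; so the load of every edge
  is at most \<Lambda> c(e) with \<Lambda> = log (1 + \<epsilon>) ((1 + \<epsilon>)(1 + w) / \<delta>), which gives feasibility of
  x / \<Lambda>, and since the bottleneck edge gains one unit of relative load per iteration, \<tau> \<le> m \<Lambda>.
  For the value, the dual cost D(y) = \<Sum> c(e) y(e) grows per iteration by \<epsilon> c_i y(P_i) \<le>
  \<epsilon> (1 + w) c_i \<alpha>(i), while weak LP duality gives \<beta> (\<alpha>(i) - \<delta> L) \<le> D(y_i) - D(y_0). A discrete
  Gronwall argument turns this into \<alpha>(i) \<le> \<delta> L exp (\<epsilon> (1 + w) f_i / \<beta>), and \<alpha>(\<tau>) \<ge> 1 at
  termination; for the chosen \<delta> this rearranges to f_\<tau> / \<Lambda> \<ge> \<beta> / (1 + 5 \<epsilon>).\<close>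

lemma ln_add_one_ge_quadratic:
  fixes x :: real
  assumes "0 \<le> x"
  shows "x - x\<^sup>2 / 2 \<le> ln (1 + x)"
proof -
  let ?g = "\<lambda>x::real. ln (1 + x) - x + x\<^sup>2 / 2"
  have "?g 0 \<le> ?g x"
  proof (rule DERIV_nonneg_imp_nondecreasing[OF assms])
    fix y :: real assume y: "0 \<le> y" "y \<le> x"
    have "(?g has_real_derivative (1 / (1 + y) - 1 + y)) (at y)"
      using y by (auto intro!: derivative_eq_intros)
    moreover have "1 / (1 + y) - 1 + y = y\<^sup>2 / (1 + y)"
      using y by (simp add: field_simps power2_eq_square)
    ultimately show "\<exists>d. (?g has_real_derivative d) (at y) \<and> 0 \<le> d"
      using y by auto
  qed
  then show ?thesis by simp
qed

lemma powr_le_one_plus_mult: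
  fixes a e :: real
  assumes "0 \<le> a" "a \<le> 1" "0 < e"
  shows "(1 + e) powr a \<le> 1 + a * e"
proof -
  have "(1 - a) * ln 1 + a * ln (1 + e) \<le> ln ((1 - a) *\<^sub>R 1 + a *\<^sub>R (1 + e))"
    using ln_concave assms unfolding concave_on_iff
    by (metis diff_add_cancel diff_ge_0_iff_ge greaterThan_iff zero_less_one add_pos_pos)
  then have "a * ln (1 + e) \<le> ln (1 + a * e)"
    by (simp add: algebra_simps)
  then show ?thesis
    using assms by (simp add: powr_def ln_ge_iff[symmetric] add_pos_nonneg)
qed

lemma ln_one_plus_ge_ratio:
  fixes e :: real
  assumes "0 < e" "e \<le> 1/3"
  shows "e * (1 + e) \<le> (1 - e) * (1 + 5 * e) * ln (1 + e)"
proof -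
  have "e * (1 + e) \<le> (1 - e) * (1 + 5 * e) * (e - e\<^sup>2 / 2)"
  proof -
    have "(1 - e) * (1 + 5 * e) * (e - e\<^sup>2 / 2) - e * (1 + e)
        = e\<^sup>2 * (5/2 - 7 * e + 5/2 * e\<^sup>2)"
      by (simp add: algebra_simps power2_eq_square)
    moreover have "0 \<le> 5/2 - 7 * e + 5/2 * e\<^sup>2"
      using assms by (simp add: power2_eq_square)
    ultimately show ?thesis by (smt (verit) zero_le_power2 mult_nonneg_nonneg)
  qed
  also have "\<dots> \<le> (1 - e) * (1 + 5 * e) * ln (1 + e)"
    using assms ln_add_one_ge_quadratic[of e] by (intro mult_left_mono) auto
  finally show ?thesis .
qed

lemma discrete_gronwall:
  fixes a g :: "nat \<Rightarrow> real"
  assumes rec: "\<And>i. a i \<le> A + \<Phi> * (\<Sum>j<i. g j * a j)"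
    and "\<And>j. 0 \<le> g j" "\<And>j. 0 \<le> a j" "0 \<le> \<Phi>" "0 \<le> A"
  shows "a n \<le> A * exp (\<Phi> * (\<Sum>j<n. g j))"
proof -
  define S where "S i = A + \<Phi> * (\<Sum>j<i. g j * a j)" for i
  have S_nonneg: "0 \<le> S i" for i
    unfolding S_def using assms by (intro add_nonneg_nonneg mult_nonneg_nonneg sum_nonneg) auto
  have "S i \<le> A * exp (\<Phi> * (\<Sum>j<i. g j))" for i
  proof (induction i)
    case 0
    show ?case by (simp add: S_def)
  next
    case (Suc i)
    have "S (Suc i) = S i + \<Phi> * g i * a i" by (simp add: S_def algebra_simps)
    also have "\<dots> \<le> S i + \<Phi> * g i * S i"
      using rec[of i] assms by (simp add: S_def mult_left_mono)
    also have "\<dots> = S i * (1 + \<Phi> * g i)" by (simp add: algebra_simps)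
    also have "\<dots> \<le> S i * exp (\<Phi> * g i)"
      using S_nonneg[of i] exp_ge_add_one_self by (intro mult_left_mono) auto
    also have "\<dots> \<le> A * exp (\<Phi> * (\<Sum>j<i. g j)) * exp (\<Phi> * g i)"
      using Suc by (intro mult_right_mono) auto
    also have "\<dots> = A * exp (\<Phi> * (\<Sum>j<Suc i. g j))"
      by (simp add: exp_add[symmetric] algebra_simps)
    finally show ?case .
  qed
  then show ?thesis
    using rec[of n] unfolding S_def by (meson order_trans)
qed

lemma sum_fun_upd_add:
  fixes f :: "'a \<Rightarrow> real"
  assumes "finite A"
  shows "(\<Sum>x\<in>A. (f(p := f p + d)) x) = (\<Sum>x\<in>A. f x) + (if p \<in> A then d else 0)"
proof -
  have "f(p := f p + d) = (\<lambda>x. f x + (if p = x then d else 0))" by auto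
  then show ?thesis using assms by (simp add: sum.distrib)
qed

lemma set_eq_insert_hd_edges_of:
  "vs \<noteq> [] \<Longrightarrow> set vs = insert (hd vs) (snd ` set (edges_of vs))"
  by (cases vs) (auto simp: edges_of_def map_snd_zip_take simp flip: set_map)

lemma edges_of_nonempty: "vs \<noteq> [] \<Longrightarrow> hd vs \<noteq> last vs \<Longrightarrow> edges_of vs \<noteq> []"
  by (cases vs rule: remdups_adj.cases) (auto simp: edges_of_def)

lemma bounded_path_edges_subset:
  "P \<in> bounded_paths E len s t L \<Longrightarrow> set (edges_of P) \<subseteq> E"
  by (simp add: bounded_paths_def simple_st_path_def)

lemma bounded_path_edges_nonempty:
  "s \<noteq> t \<Longrightarrow> P \<in> bounded_paths E len s t L \<Longrightarrow> set (edges_of P) \<noteq> {}"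
  using edges_of_nonempty[of P] by (auto simp: bounded_paths_def simple_st_path_def)

lemma card_edges_of_bounded_path:
  assumes "\<forall>e\<in>E. 1 \<le> len e" "P \<in> bounded_paths E len s t L"
  shows "card (set (edges_of P)) \<le> L"
proof -
  have "card (set (edges_of P)) = (\<Sum>e\<in>set (edges_of P). 1)" by simp
  also have "\<dots> \<le> (\<Sum>e\<in>set (edges_of P). len e)"
    using assms bounded_path_edges_subset[OF assms(2)] by (intro sum_mono) auto
  also have "\<dots> \<le> L" using assms(2) by (simp add: bounded_paths_def plen_def)
  finally show ?thesis .
qed

lemma finite_bounded_paths:
  assumes "finite E"
  shows "finite (bounded_paths E len s t L)"
proof (rule finite_subset)
  show "bounded_paths E len s t L \<subseteq> {vs. set vs \<subseteq> insert s (snd ` E) \<and> distinct vs}"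
    using set_eq_insert_hd_edges_of
    by (fastforce simp: bounded_paths_def simple_st_path_def)
  show "finite {vs. set vs \<subseteq> insert s (snd ` E) \<and> distinct vs}"
    using assms by (intro finite_subset_distinct) auto
qed

lemma beta_le_cost:
  assumes "\<forall>e\<in>E. 0 \<le> c e" "\<forall>e\<in>E. 0 \<le> y e"
    and "\<forall>P\<in>bounded_paths E len s t L. 1 \<le> plen y P"
  shows "beta E c len s t L \<le> (\<Sum>e\<in>E. c e * y e)"
  unfolding beta_def
proof (rule cInf_lower)
  show "bdd_below {\<Sum>e\<in>E. c e * y e |y. (\<forall>e\<in>E. 0 \<le> y e)
      \<and> (\<forall>P\<in>bounded_paths E len s t L. 1 \<le> plen y P)}"
    using assms(1) by (intro bdd_belowI[of _ 0]) (auto intro: sum_nonneg)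
qed (use assms in blast)

lemma flow_value_divide:
  "flow_value E len s t L (\<lambda>P. x P / a) = flow_value E len s t L x / a"
  by (simp add: flow_value_def sum_divide_distrib)

locale approx_general =
  fixes E :: "('v \<times> 'v) set" and c :: "'v \<times> 'v \<Rightarrow> real" and len :: "'v \<times> 'v \<Rightarrow> nat"
    and s t :: 'v and L :: nat and \<epsilon> w \<delta> :: real
    and Orc :: "('v \<times> 'v \<Rightarrow> real) \<Rightarrow> 'v list"
  assumes finite_E: "finite E" and cap_pos: "\<forall>e\<in>E. 0 < c e" and len_ge_1: "\<forall>e\<in>E. 1 \<le> len e"
    and s_ne_t: "s \<noteq> t" and paths_nonempty: "bounded_paths E len s t L \<noteq> {}"
    and eps_pos: "0 < \<epsilon>" and w_nonneg: "0 \<le> w"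
    and delta_pos: "0 < \<delta>" and delta_less: "\<delta> < (1 + \<epsilon>) * (1 + w)"
    and approx_Orc: "approx_oracle E len s t L w Orc"
begin

abbreviation PL :: "'v list set" where "PL \<equiv> bounded_paths E len s t L"
abbreviation cont :: "nat \<Rightarrow> bool" where "cont \<equiv> ag_continue \<epsilon> \<delta> w Orc c"
abbreviation opt :: real where "opt \<equiv> beta E c len s t L"

definition primal :: "nat \<Rightarrow> 'v list \<Rightarrow> real" where "primal i = fst (ag_state \<epsilon> \<delta> Orc c i)"
definition dual :: "nat \<Rightarrow> 'v \<times> 'v \<Rightarrow> real" where "dual i = snd (ag_state \<epsilon> \<delta> Orc c i)"
definition path :: "nat \<Rightarrow> 'v list" where "path i = Orc (dual i)"
definition cmin :: "nat \<Rightarrow> real" where "cmin i = Min (c ` set (edges_of (path i)))"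
definition alpha :: "nat \<Rightarrow> real" where "alpha i = dL E len s t L (dual i)"
definition load :: "'v \<times> 'v \<Rightarrow> nat \<Rightarrow> real" where
  "load e i = (\<Sum>P\<in>{P\<in>PL. e \<in> set (edges_of P)}. primal i P)"
definition dual_cost :: "nat \<Rightarrow> real" where "dual_cost i = (\<Sum>e\<in>E. c e * dual i e)"
definition scale :: real where "scale = log (1 + \<epsilon>) ((1 + \<epsilon>) * (1 + w) / \<delta>)"
definition stop :: nat where "stop = (LEAST i. \<not> cont i)"

lemma primal_0: "primal 0 = (\<lambda>_. 0)" and dual_0: "dual 0 = (\<lambda>_. \<delta>)"
  by (simp_all add: primal_def dual_def)

lemma primal_Suc: "primal (Suc i) = (primal i)(path i := primal i (path i) + cmin i)"
  by (simp add: primal_def dual_def path_def cmin_def ag_step_def Let_def)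

lemma dual_Suc: "dual (Suc i) e = (if e \<in> set (edges_of (path i))
    then dual i e * (1 + \<epsilon> * cmin i / c e) else dual i e)"
  by (simp add: dual_def path_def cmin_def ag_step_def Let_def)

lemma cont_iff: "cont i \<longleftrightarrow> plen (dual i) (path i) < 1 + w"
  by (simp add: ag_continue_def dual_def path_def Let_def)

lemma cmin_attained:
  assumes "path i \<in> PL"
  shows "cmin i \<in> c ` set (edges_of (path i))" "\<And>e. e \<in> set (edges_of (path i)) \<Longrightarrow> cmin i \<le> c e"
  using bounded_path_edges_nonempty[OF s_ne_t assms] by (simp_all add: cmin_def)

lemma cmin_pos_if: "path i \<in> PL \<Longrightarrow> 0 < cmin i"
  using cmin_attained(1) bounded_path_edges_subset cap_pos by fastforce

lemma dual_pos: "0 < dual i e"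
proof (induction i arbitrary: e)
  case 0
  show ?case by (simp add: dual_0 delta_pos)
next
  case (Suc i)
  have "path i \<in> PL"
    using approx_Orc Suc unfolding approx_oracle_def path_def by (meson less_imp_le)
  then have "e \<in> set (edges_of (path i)) \<Longrightarrow> 0 < 1 + \<epsilon> * cmin i / c e"
    using cmin_pos_if bounded_path_edges_subset cap_pos eps_pos
    by (fastforce intro: add_pos_nonneg)
  then show ?case using Suc by (simp add: dual_Suc)
qed

lemma path_in_PL: "path i \<in> PL"
  and plen_path_le: "plen (dual i) (path i) \<le> (1 + w) * alpha i"
  using approx_Orc dual_pos unfolding approx_oracle_def path_def alpha_def by (meson less_imp_le)+

lemma path_edge_in_E: "e \<in> set (edges_of (path i)) \<Longrightarrow> e \<in> E"
  using bounded_path_edges_subset[OF path_in_PL] by blast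

lemma cmin_pos: "0 < cmin i"
  using cmin_pos_if[OF path_in_PL] .

lemmas cmin_le = cmin_attained(2)[OF path_in_PL]

lemma alpha_le_plen: "P \<in> PL \<Longrightarrow> alpha i \<le> plen (dual i) P"
  using finite_bounded_paths[OF finite_E] by (simp add: alpha_def dL_def)

lemma plen_dual_nonneg: "0 \<le> plen (dual i) P"
  unfolding plen_def using dual_pos by (simp add: sum_nonneg less_imp_le)

lemma alpha_nonneg: "0 \<le> alpha i"
proof -
  have "alpha i \<in> plen (dual i) ` PL"
    unfolding alpha_def dL_def using finite_bounded_paths[OF finite_E] paths_nonempty
    by (intro Min_in) auto
  then show ?thesis using plen_dual_nonneg by auto
qed

lemma dual_le_plen_path: "e \<in> set (edges_of (path i)) \<Longrightarrow> dual i e \<le> plen (dual i) (path i)"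
  unfolding plen_def using dual_pos by (intro member_le_sum) (auto simp: less_imp_le)

lemma dual_mono: "dual i e \<le> dual (Suc i) e"
proof -
  have "e \<in> set (edges_of (path i)) \<Longrightarrow> 0 \<le> \<epsilon> * cmin i / c e"
    using cmin_pos[of i] eps_pos cap_pos path_edge_in_E by (simp add: less_imp_le)
  then show ?thesis using dual_pos[of i e] by (simp add: dual_Suc)
qed

lemma dual_ge_delta: "\<delta> \<le> dual i e"
  by (induction i) (auto simp: dual_0 intro: order_trans[OF _ dual_mono])

lemma primal_nonneg: "0 \<le> primal i P"
  by (induction i arbitrary: P) (auto simp: primal_0 primal_Suc less_imp_le[OF cmin_pos])

lemma primal_outside: "P \<notin> PL \<Longrightarrow> primal i P = 0"
  by (induction i) (auto simp: primal_0 primal_Suc path_in_PL)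

lemma flow_value_primal: "flow_value E len s t L (primal i) = (\<Sum>j<i. cmin j)"
proof (induction i)
  case 0
  show ?case by (simp add: flow_value_def primal_0)
next
  case (Suc i)
  then show ?case
    unfolding flow_value_def primal_Suc using finite_bounded_paths[OF finite_E] path_in_PL
    by (subst sum_fun_upd_add) auto
qed

lemma flow_value_primal_nonneg: "0 \<le> flow_value E len s t L (primal i)"
  by (simp add: flow_value_primal sum_nonneg less_imp_le cmin_pos)

lemma load_0: "load e 0 = 0"
  by (simp add: load_def primal_0)

lemma load_Suc: "load e (Suc i) = load e i + (if e \<in> set (edges_of (path i)) then cmin i else 0)"
  unfolding load_def primal_Suc using finite_bounded_paths[OF finite_E] path_in_PL
  by (subst sum_fun_upd_add) auto

text \<open>Since (1 + \<epsilon>) powr a \<le> 1 + a \<epsilon> for 0 \<le> a \<le> 1, each multiplicative update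
  of an edge length outweighs the growth of its load.\<close>
lemma dual_ge_load: "e \<in> E \<Longrightarrow> \<delta> * (1 + \<epsilon>) powr (load e i / c e) \<le> dual i e"
proof (induction i)
  case 0
  show ?case using eps_pos by (simp add: load_0 dual_0)
next
  case (Suc i)
  show ?case
  proof (cases "e \<in> set (edges_of (path i))")
    case True
    define a where "a = cmin i / c e"
    have "0 < c e" using cap_pos Suc.prems by blast
    then have a: "0 \<le> a" "a \<le> 1"
      using cmin_pos[of i] cmin_le[OF True] by (auto simp: a_def)
    have "\<delta> * (1 + \<epsilon>) powr (load e (Suc i) / c e) = \<delta> * (1 + \<epsilon>) powr (load e i / c e) * (1 + \<epsilon>) powr a"
      using True by (simp add: load_Suc a_def add_divide_distrib powr_add)
    also have "\<dots> \<le> dual i e * (1 + a * \<epsilon>)"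
      using Suc powr_le_one_plus_mult[OF a eps_pos] delta_pos eps_pos dual_pos[of i e]
      by (intro mult_mono) (auto simp: less_imp_le)
    also have "\<dots> = dual (Suc i) e"
      using True by (simp add: dual_Suc a_def)
    finally show ?thesis .
  next
    case False
    then show ?thesis using Suc by (simp add: load_Suc dual_Suc)
  qed
qed

text \<open>While the loop runs, a lengthened edge lies on a path of length below 1 + w.\<close>
lemma dual_le_while_cont:
  assumes "\<forall>j<T. cont j"
  shows "dual T e \<le> (1 + \<epsilon>) * (1 + w)"
  using assms
proof (induction T)
  case 0
  show ?case using delta_less by (simp add: dual_0)
next
  case (Suc T)
  show ?case
  proof (cases "e \<in> set (edges_of (path T))")
    case True
    have "0 < c e" using cap_pos path_edge_in_E[OF True] by blast
    then have "\<epsilon> * cmin T / c e \<le> \<epsilon>"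
      using cmin_le[OF True] eps_pos by (simp add: divide_le_eq)
    moreover have "dual T e < 1 + w"
      using dual_le_plen_path[OF True] Suc.prems cont_iff by fastforce
    ultimately have "dual T e * (1 + \<epsilon> * cmin T / c e) \<le> (1 + w) * (1 + \<epsilon>)"
      using dual_pos[of T e] eps_pos cmin_pos[of T] \<open>0 < c e\<close> by (intro mult_mono) auto
    then show ?thesis using True by (simp add: dual_Suc mult.commute)
  next
    case False
    then show ?thesis using Suc by (simp add: dual_Suc)
  qed
qed

lemma scale_pos: "0 < scale"
  using delta_pos delta_less eps_pos by (simp add: scale_def)

lemma load_le_while_cont:
  assumes "\<forall>j<T. cont j" "e \<in> E"
  shows "load e T \<le> scale * c e"
proof -
  have "\<delta> * (1 + \<epsilon>) powr (load e T / c e) \<le> (1 + \<epsilon>) * (1 + w)"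
    using dual_ge_load[OF assms(2)] dual_le_while_cont[OF assms(1)] by (meson order_trans)
  then have "(1 + \<epsilon>) powr (load e T / c e) \<le> (1 + \<epsilon>) * (1 + w) / \<delta>"
    using delta_pos by (simp add: pos_le_divide_eq mult.commute)
  then have "load e T / c e \<le> scale"
    unfolding scale_def using eps_pos delta_pos w_nonneg by (subst le_log_iff) auto
  then show ?thesis
    using cap_pos assms(2) by (simp add: divide_le_eq)
qed

text \<open>In each iteration the bottleneck edge of the chosen path gains one unit of relative load.\<close>
lemma iterations_le_relative_load: "real i \<le> (\<Sum>e\<in>E. load e i / c e)"
proof (induction i)
  case 0
  show ?case by (simp add: load_0)
next
  case (Suc i)
  obtain b where b: "b \<in> set (edges_of (path i))" "c b = cmin i"
    using cmin_attained(1)[OF path_in_PL] by (metis imageE)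
  have "1 \<le> (\<Sum>e\<in>E. (if e \<in> set (edges_of (path i)) then cmin i else 0) / c e)"
    using b path_edge_in_E[OF b(1)] cmin_pos[of i] cap_pos finite_E
    by (intro member_le_sum[of b, THEN order_trans[rotated]]) (auto intro: sum_nonneg less_imp_le)
  then show ?case
    using Suc by (simp add: load_Suc add_divide_distrib sum.distrib)
qed

lemma iterations_le_while_cont:
  assumes "\<forall>j<T. cont j"
  shows "real T \<le> real (card E) * scale"
proof -
  have "real T \<le> (\<Sum>e\<in>E. load e T / c e)" by (rule iterations_le_relative_load)
  also have "\<dots> \<le> (\<Sum>e\<in>E. scale)"
    using load_le_while_cont[OF assms] cap_pos by (intro sum_mono) (simp add: divide_le_eq)
  finally show ?thesis by simp
qed

lemma ex_not_cont: "\<exists>i. \<not> cont i"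
proof (rule ccontr)
  define T where "T = nat \<lceil>real (card E) * scale\<rceil> + 1"
  assume "\<nexists>i. \<not> cont i"
  then have "real T \<le> real (card E) * scale"
    by (intro iterations_le_while_cont) blast
  then show False
    unfolding T_def by linarith
qed

lemma not_cont_stop: "\<not> cont stop"
  unfolding stop_def by (rule LeastI_ex[OF ex_not_cont])

lemma cont_before_stop: "\<forall>i<stop. cont i"
  unfolding stop_def using not_less_Least by blast

lemma stop_le: "real stop \<le> real (card E) * of_int \<lceil>scale\<rceil>"
proof -
  have "real (card E) * scale \<le> real (card E) * of_int \<lceil>scale\<rceil>"
    by (intro mult_left_mono) auto
  then show ?thesis using iterations_le_while_cont[OF cont_before_stop] by linarith
qed

lemma feasible_scaled_primal: "feasible_Lflow E c len s t L (\<lambda>P. primal stop P / scale)"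
  unfolding feasible_Lflow_def
proof (intro conjI allI ballI impI)
  fix e assume "e \<in> E"
  have "(\<Sum>P\<in>{P\<in>PL. e \<in> set (edges_of P)}. primal stop P / scale) = load e stop / scale"
    by (simp add: load_def sum_divide_distrib)
  also have "\<dots> \<le> c e"
    using load_le_while_cont[OF cont_before_stop \<open>e \<in> E\<close>] scale_pos
    by (simp add: pos_divide_le_eq mult.commute)
  finally show "(\<Sum>P\<in>{P\<in>PL. e \<in> set (edges_of P)}. primal stop P / scale) \<le> c e" .
qed (use primal_nonneg primal_outside scale_pos in auto)

lemma dual_cost_Suc: "dual_cost (Suc i) = dual_cost i + \<epsilon> * cmin i * plen (dual i) (path i)"
proof -
  let ?S = "set (edges_of (path i))"
  have "dual_cost (Suc i) - dual_cost i = (\<Sum>e\<in>E. if e \<in> ?S then \<epsilon> * cmin i * dual i e else 0)"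
    unfolding dual_cost_def sum_subtractf[symmetric]
    using path_edge_in_E cap_pos by (intro sum.cong) (auto simp: dual_Suc field_simps)
  also have "\<dots> = (\<Sum>e\<in>?S. \<epsilon> * cmin i * dual i e)"
    using path_edge_in_E finite_E by (simp add: sum.inter_restrict[symmetric] Int_absorb1 subsetI)
  also have "\<dots> = \<epsilon> * cmin i * plen (dual i) (path i)"
    by (simp add: plen_def sum_distrib_left)
  finally show ?thesis by simp
qed

lemma dual_cost_growth: "dual_cost i - dual_cost 0 \<le> \<epsilon> * (1 + w) * (\<Sum>j<i. cmin j * alpha j)"
proof (induction i)
  case (Suc i)
  have "\<epsilon> * cmin i * plen (dual i) (path i) \<le> \<epsilon> * cmin i * ((1 + w) * alpha i)"
    using plen_path_le eps_pos cmin_pos[of i] by (intro mult_left_mono) auto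
  then show ?case using Suc by (simp add: dual_cost_Suc algebra_simps)
qed simp

lemma dual_cost_mono: "dual_cost 0 \<le> dual_cost i"
  unfolding dual_cost_def using cap_pos dual_ge_delta
  by (intro sum_mono mult_left_mono) (auto simp: dual_0 less_imp_le)

text \<open>Weak duality: for alpha i > \<delta> L, the lengths (dual i - \<delta>) / (alpha i - \<delta> L) are
  feasible for the covering LP, since every path in PL has at most L edges.\<close>
lemma opt_mult_alpha_le:
  assumes "0 < opt"
  shows "opt * (alpha i - \<delta> * L) \<le> dual_cost i - dual_cost 0"
proof (cases "alpha i \<le> \<delta> * L")
  case True
  then show ?thesis using assms dual_cost_mono[of i] by (smt (verit) mult_nonneg_nonpos)
next
  case False
  define q where "q = alpha i - \<delta> * L"
  have "0 < q" using False by (simp add: q_def)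
  define z where "z e = (dual i e - \<delta>) / q" for e
  have "opt \<le> (\<Sum>e\<in>E. c e * z e)"
  proof (rule beta_le_cost)
    show "\<forall>e\<in>E. 0 \<le> c e" "\<forall>e\<in>E. 0 \<le> z e"
      using cap_pos dual_ge_delta \<open>0 < q\<close> by (auto simp: z_def less_imp_le)
    show "\<forall>P\<in>PL. 1 \<le> plen z P"
    proof
      fix P assume P: "P \<in> PL"
      have "plen z P = (plen (dual i) P - \<delta> * card (set (edges_of P))) / q"
        by (simp add: plen_def z_def sum_divide_distrib[symmetric] sum_subtractf)
      moreover have "\<delta> * card (set (edges_of P)) \<le> \<delta> * L"
        using card_edges_of_bounded_path[OF len_ge_1 P] delta_pos by simp
      ultimately show "1 \<le> plen z P"
        using alpha_le_plen[OF P, of i] \<open>0 < q\<close> by (simp add: q_def)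
    qed
  qed
  also have "(\<Sum>e\<in>E. c e * z e) = (dual_cost i - dual_cost 0) / q"
    by (simp add: dual_cost_def z_def dual_0 sum_divide_distrib[symmetric] sum_subtractf algebra_simps)
  finally show ?thesis using \<open>0 < q\<close> by (simp add: q_def pos_le_divide_eq)
qed

lemma alpha_le_exp:
  assumes "0 < opt"
  shows "alpha i \<le> \<delta> * L * exp (\<epsilon> * (1 + w) / opt * flow_value E len s t L (primal i))"
proof -
  have "alpha n \<le> \<delta> * L + \<epsilon> * (1 + w) / opt * (\<Sum>j<n. cmin j * alpha j)" for n
    using opt_mult_alpha_le[OF assms, of n] dual_cost_growth[of n] assms
    by (simp add: field_simps)
  then show ?thesis
    unfolding flow_value_primal using cmin_pos alpha_nonneg eps_pos w_nonneg assms delta_pos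
    by (intro discrete_gronwall) (auto simp: less_imp_le)
qed

lemma one_le_exp_at_stop:
  assumes "0 < opt"
  shows "1 \<le> \<delta> * L * exp (\<epsilon> * (1 + w) / opt * flow_value E len s t L (primal stop))"
proof -
  have "1 + w \<le> (1 + w) * alpha stop"
    using not_cont_stop plen_path_le[of stop] by (simp add: cont_iff)
  then have "1 \<le> alpha stop" using w_nonneg by simp
  then show ?thesis using alpha_le_exp[OF assms] by (rule order_trans)
qed

end

lemma scaled_value_ge:
  fixes \<epsilon> \<beta> M f :: real
  assumes eps: "0 < \<epsilon>" "\<epsilon> \<le> 1/3" and M: "1 < M" and f: "0 \<le> f"
    and one_le: "0 < \<beta> \<Longrightarrow> 1 \<le> M powr (1 - 1 / \<epsilon>) * exp (\<epsilon> * (1 + \<epsilon>) / \<beta> * f)"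
  shows "\<beta> / (1 + 5 * \<epsilon>) \<le> f / (ln M / (\<epsilon> * ln (1 + \<epsilon>)))"
proof (cases "0 < \<beta>")
  case True
  have "0 \<le> ln (M powr (1 - 1 / \<epsilon>) * exp (\<epsilon> * (1 + \<epsilon>) / \<beta> * f))"
    using one_le[OF True] by simp
  then have "(1 / \<epsilon> - 1) * ln M \<le> \<epsilon> * (1 + \<epsilon>) / \<beta> * f"
    using M by (simp add: ln_mult ln_powr algebra_simps)
  then have "(1 - \<epsilon>) * (\<beta> * ln M) \<le> \<epsilon> * (\<epsilon> * (1 + \<epsilon>)) * f"
    using eps True by (simp add: field_simps)
  also have "\<dots> = \<epsilon> * (1 + \<epsilon>) * (\<epsilon> * f)" by (simp add: algebra_simps)
  also have "\<dots> \<le> (1 - \<epsilon>) * (1 + 5 * \<epsilon>) * ln (1 + \<epsilon>) * (\<epsilon> * f)"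
    using eps f by (intro mult_right_mono ln_one_plus_ge_ratio) auto
  also have "\<dots> = (1 - \<epsilon>) * (\<epsilon> * (1 + 5 * \<epsilon>) * ln (1 + \<epsilon>) * f)"
    by (simp add: algebra_simps)
  finally have "\<beta> * ln M \<le> \<epsilon> * (1 + 5 * \<epsilon>) * ln (1 + \<epsilon>) * f"
    using eps by simp
  then show ?thesis
    using eps M by (simp add: field_simps)
next
  case False
  then have "\<beta> / (1 + 5 * \<epsilon>) \<le> 0"
    using eps by (intro divide_nonpos_pos) auto
  also have "0 \<le> f / (ln M / (\<epsilon> * ln (1 + \<epsilon>)))"
    using eps M f by simp
  finally show ?thesis .
qed

lemma delta_choice:
  fixes \<epsilon> K \<delta> :: real
  assumes "0 < \<epsilon>" "1 < K" "1 \<le> L" "\<delta> = K / (K * L) powr (1 / \<epsilon>)"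
  shows "1 < K * L" "0 < \<delta>" "\<delta> < K"
    and "log (1 + \<epsilon>) (K / \<delta>) = ln (K * L) / (\<epsilon> * ln (1 + \<epsilon>))"
    and "\<delta> * L = (K * L) powr (1 - 1 / \<epsilon>)"
proof -
  have "K * 1 \<le> K * L" using assms by (intro mult_left_mono) auto
  then show M: "1 < K * L" using assms by linarith
  then have Mp: "1 < (K * L) powr (1 / \<epsilon>)"
    using assms by simp
  show "0 < \<delta>" "\<delta> < K" using assms Mp by (simp_all add: divide_less_eq)
  show "log (1 + \<epsilon>) (K / \<delta>) = ln (K * L) / (\<epsilon> * ln (1 + \<epsilon>))"
    using assms M by (simp add: log_def ln_powr)
  show "\<delta> * L = (K * L) powr (1 - 1 / \<epsilon>)"
    using assms M by (simp add: powr_diff)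
qed

theorem mainTheorem6:
  fixes E :: "('v \<times> 'v) set" and c :: "'v \<times> 'v \<Rightarrow> real" and len :: "'v \<times> 'v \<Rightarrow> nat"
    and s t :: 'v and L :: nat and \<epsilon> w \<delta> :: real
    and Orc :: "('v \<times> 'v \<Rightarrow> real) \<Rightarrow> 'v list"
  assumes "finite E"
    and "\<forall>e\<in>E. 0 < c e" and "\<forall>e\<in>E. 1 \<le> len e"
    and "s \<noteq> t" and "0 < L"
    and "bounded_paths E len s t L \<noteq> {}"
    and "0 < \<epsilon>" and "\<epsilon> \<le> 1/3"
    and "w = \<epsilon>"
    and "\<delta> = (1 + \<epsilon>) * (1 + w) / (((1 + \<epsilon>) * (1 + w) * real L) powr (1 / \<epsilon>))"
    and "approx_oracle E len s t L w Orc"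
  shows "\<exists>\<tau>. (\<forall>i<\<tau>. ag_continue \<epsilon> \<delta> w Orc c i) \<and> \<not> ag_continue \<epsilon> \<delta> w Orc c \<tau>
     \<and> real \<tau> \<le> real (card E) * of_int \<lceil>log (1 + \<epsilon>) ((1 + \<epsilon>) * (1 + w) / \<delta>)\<rceil>
     \<and> feasible_Lflow E c len s t L
         (\<lambda>P. fst (ag_state \<epsilon> \<delta> Orc c \<tau>) P / log (1 + \<epsilon>) ((1 + \<epsilon>) * (1 + w) / \<delta>))
     \<and> flow_value E len s t L
         (\<lambda>P. fst (ag_state \<epsilon> \<delta> Orc c \<tau>) P / log (1 + \<epsilon>) ((1 + \<epsilon>) * (1 + w) / \<delta>))
       \<ge> beta E c len s t L / (1 + 5 * \<epsilon>)"
proof -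
  define K where "K = (1 + \<epsilon>) * (1 + w)"
  have "1 < K" using assms by (simp add: K_def less_1_mult)
  have L: "1 \<le> real L" using assms by simp
  have choice: "1 < K * L" "0 < \<delta>" "\<delta> < K"
    "log (1 + \<epsilon>) (K / \<delta>) = ln (K * L) / (\<epsilon> * ln (1 + \<epsilon>))"
    "\<delta> * L = (K * L) powr (1 - 1 / \<epsilon>)"
    using delta_choice[OF \<open>0 < \<epsilon>\<close> \<open>1 < K\<close> L] assms by (simp_all add: K_def)
  interpret approx_general E c len s t L \<epsilon> w \<delta> Orc
    using assms choice by unfold_locales (auto simp: K_def)
  have scale: "scale = ln (K * L) / (\<epsilon> * ln (1 + \<epsilon>))"
    using choice(4) by (simp add: scale_def K_def)
  have "opt / (1 + 5 * \<epsilon>) \<le> flow_value E len s t L (primal stop) / scale"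
    unfolding scale using \<open>0 < \<epsilon>\<close> \<open>\<epsilon> \<le> 1/3\<close> choice(1) flow_value_primal_nonneg
  proof (rule scaled_value_ge)
    show "1 \<le> (K * L) powr (1 - 1 / \<epsilon>) * exp (\<epsilon> * (1 + \<epsilon>) / opt * flow_value E len s t L (primal stop))"
      if "0 < opt"
      using one_le_exp_at_stop[OF that] by (simp add: choice(5) \<open>w = \<epsilon>\<close>)
  qed
  then show ?thesis
    using cont_before_stop not_cont_stop stop_le feasible_scaled_primal
    unfolding flow_value_divide primal_def scale_def by blast
qed

end
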